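(* For every integer $k\ge1$, $$\sum_{j=0}^{\lfloor\frac{k-1}{2}\rfloor}(k-2j)\binom{k}{j}^2=k\binom{k-1}{\lfloor\frac{k-1}{2}\rfloor}^2.$$ *)

theory Defs
  imports Main
begin

end

theory Submission
  imports Defs
begin

text \<open>Each summand telescopes: by Pascal's rule and the two absorption identities,
  \<open>(n + 1 - 2j) C(n+1, j)\<^sup>2 = (n + 1) (C(n, j)\<^sup>2 - C(n, j - 1)\<^sup>2)\<close>,
  so the partial sum up to \<open>m\<close> collapses to \<open>(n + 1) C(n, m)\<^sup>2\<close>.\<close>

lemma Suc_times_binomial_int:
  "int (Suc j) * int (Suc n choose Suc j) = int (Suc n) * int (n choose j)"
  by (metis Suc_times_binomial of_nat_mult)

lemma diff_times_binomial_Suc_int: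
  "(int n - int j) * int (Suc n choose Suc j) = int (Suc n) * int (n choose Suc j)"
proof (cases "j \<le> n")
  case True
  have "(n - j) * (Suc n choose Suc j) = Suc n * (n choose Suc j)"
    using binomial_absorb_comp[of "Suc n" "Suc j"] by simp
  then show ?thesis
    using True by (metis of_nat_diff of_nat_mult)
next
  case False
  then show ?thesis by (simp del: binomial_Suc_Suc add: binomial_eq_0)
qed

lemma weighted_binomial_square_telescope:
  "(int (Suc n) - 2 * int (Suc j)) * int (Suc n choose Suc j) ^ 2
     = int (Suc n) * (int (n choose Suc j) ^ 2 - int (n choose j) ^ 2)"
proof -
  define a where "a = int (n choose j)"
  define b where "b = int (n choose Suc j)"
  define c where "c = int (Suc n choose Suc j)"
  have pascal: "c = a + b"
    unfolding a_def b_def c_def by simp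
  have "(int (Suc n) - 2 * int (Suc j)) * c ^ 2 = ((int n - int j) * c - int (Suc j) * c) * c"
    by (simp add: power2_eq_square algebra_simps)
  also have "\<dots> = (int (Suc n) * b - int (Suc n) * a) * c"
    unfolding a_def b_def c_def Suc_times_binomial_int diff_times_binomial_Suc_int ..
  also have "\<dots> = int (Suc n) * (b ^ 2 - a ^ 2)"
    by (simp add: pascal power2_eq_square algebra_simps)
  finally show ?thesis
    unfolding a_def b_def c_def .
qed

lemma sum_weighted_binomial_squares:
  "(\<Sum>j=0..m. (int (Suc n) - 2 * int j) * int (Suc n choose j) ^ 2)
     = int (Suc n) * int (n choose m) ^ 2"
proof (induction m)
  case 0
  then show ?case by simp
next
  case (Suc m)
  then show ?case
    using weighted_binomial_square_telescope[of n m] by (simp add: algebra_simps)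
qed

theorem lemma3p5:
  fixes k :: nat
  assumes "k \<ge> 1"
  shows "(\<Sum>j=0..(k - 1) div 2. (int k - 2 * int j) * int (k choose j) ^ 2)
         = int k * int ((k - 1) choose ((k - 1) div 2)) ^ 2"
proof -
  obtain n where "k = Suc n"
    using assms by (cases k) auto
  then show ?thesis
    using sum_weighted_binomial_squares[of n "(k - 1) div 2"] by simp
qed

end
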